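(* Suppose $(a_1,a_2,a_3)\in\mathbb Z^3$ is one of the twelve triples $$(0,-2,1),\ (1,0,0),\ (-2,0,0),\ (0,1,-2),\ (1,-4,0),\ (0,2,1),\ (-4,1,2),\ (2,0,-4),\ (0,-5,1),\ (1,3,0),\ (-5,0,3),\ (3,1,-5),$$ or belongs to one of the four infinite families $(0,-2m-2,2m+1)$, $(2m+1,0,0)$, $(-2m-2,0,0)$, $(0,2m+1,-2m-2)$ with $m$ a nonnegative integer. Then the indefinite integral $$\int \frac{(1-k^2)^{a_1}(1+k-k^2)^{a_2}(1-4k-k^2)^{a_3}}{k^{a_1+a_2+a_3+1}}\,dk$$ is a rational function of $k$; that is, there is a rational function $g(k)$ whose derivative equals the integrand. *)

theory Defs
  imports Complex_Main "HOL-Computational_Algebra.Polynomial"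
begin

definition integrand :: "int \<Rightarrow> int \<Rightarrow> int \<Rightarrow> real \<Rightarrow> real" where
  "integrand a1 a2 a3 k =
     (1 - k^2) powi a1 * (1 + k - k^2) powi a2 * (1 - 4*k - k^2) powi a3
       / k powi (a1 + a2 + a3 + 1)"

definition special_triples :: "(int \<times> int \<times> int) set" where
  "special_triples =
     {(0,-2,1), (1,0,0), (-2,0,0), (0,1,-2), (1,-4,0), (0,2,1), (-4,1,2), (2,0,-4),
      (0,-5,1), (1,3,0), (-5,0,3), (3,1,-5)}
   \<union> {(0, -2*int m - 2, 2*int m + 1) | m. True}
   \<union> {(2*int m + 1, 0, 0) | m. True}
   \<union> {(-2*int m - 2, 0, 0) | m. True}
   \<union> {(0, 2*int m + 1, -2*int m - 2) | m. True}"

end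

theory Submission
  imports Defs
begin

text \<open>
  With t = 1/k - k one has 1 - k^2 = k t, 1 + k - k^2 = k (t + 1) and 1 - 4 k - k^2 = k (t - 4),
  so the integrand is t^a1 (t + 1)^a2 (t - 4)^a3 dk/k = - t^a1 (t + 1)^a2 (t - 4)^a3 dt / s with
  s = sqrt(t^2 + 4) = 1/k + k rational in k. Hence g(t) (1/k + k) is a rational antiderivative
  whenever g is rational with (t^2 + 4) g' + t g = - t^a1 (t + 1)^a2 (t - 4)^a3; for the eight
  triples outside the four families such a g is given explicitly.

  For the families, let (x, y) parametrize the conic c y^2 = x^2 + 4 rationally in k.
  Differentiating x^(n+1) y relates the antiderivatives of x^(n+2) rho and x^n rho, where
  rho dk = - dy/x; starting from x rho and x^(-2) rho this reaches all odd and all negative even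
  powers of x. The families come from x = t and from the Moebius image x = (t - 4)/(t + 1), as
  (t - 4)^2 + 4 (t + 1)^2 = 5 (t^2 + 4).
\<close>

definition rational_function :: "(real \<Rightarrow> real) \<Rightarrow> bool" where
  "rational_function F \<longleftrightarrow>
     (\<exists>p q :: real poly. q \<noteq> 0 \<and> (\<forall>x. poly q x \<noteq> 0 \<longrightarrow> F x = poly p x / poly q x))"

lemma rational_function_const: "rational_function (\<lambda>x. c)"
  unfolding rational_function_def by (intro exI[of _ "[:c:]"] exI[of _ 1]) auto

lemma rational_function_ident: "rational_function (\<lambda>x. x)"
  unfolding rational_function_def by (intro exI[of _ "[:0, 1:]"] exI[of _ 1]) auto

lemma rational_function_add:
  assumes "rational_function f" "rational_function g"
  shows "rational_function (\<lambda>x. f x + g x)"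
proof -
  obtain p q where "q \<noteq> 0" "\<forall>x. poly q x \<noteq> 0 \<longrightarrow> f x = poly p x / poly q x"
    using assms(1) unfolding rational_function_def by blast
  moreover obtain r s where "s \<noteq> 0" "\<forall>x. poly s x \<noteq> 0 \<longrightarrow> g x = poly r x / poly s x"
    using assms(2) unfolding rational_function_def by blast
  ultimately show ?thesis
    unfolding rational_function_def
    by (intro exI[of _ "p * s + r * q"] exI[of _ "q * s"]) (auto simp: field_simps)
qed

lemma rational_function_mult:
  assumes "rational_function f" "rational_function g"
  shows "rational_function (\<lambda>x. f x * g x)"
proof -
  obtain p q where "q \<noteq> 0" "\<forall>x. poly q x \<noteq> 0 \<longrightarrow> f x = poly p x / poly q x"
    using assms(1) unfolding rational_function_def by blast
  moreover obtain r s where "s \<noteq> 0" "\<forall>x. poly s x \<noteq> 0 \<longrightarrow> g x = poly r x / poly s x"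
    using assms(2) unfolding rational_function_def by blast
  ultimately show ?thesis
    unfolding rational_function_def by (intro exI[of _ "p * r"] exI[of _ "q * s"]) auto
qed

lemma rational_function_inverse:
  assumes "rational_function f"
  shows "rational_function (\<lambda>x. inverse (f x))"
proof -
  obtain p q where q: "q \<noteq> 0" and f: "\<forall>x. poly q x \<noteq> 0 \<longrightarrow> f x = poly p x / poly q x"
    using assms unfolding rational_function_def by blast
  show ?thesis
  proof (cases "p = 0")
    case True
    with q f show ?thesis
      unfolding rational_function_def by (intro exI[of _ 0] exI[of _ q]) auto
  next
    case False
    \<comment> \<open>the denominator p q also excludes the zeros of q, where f need not be p/q\<close>
    with q f show ?thesis
      unfolding rational_function_def by (intro exI[of _ "q * q"] exI[of _ "p * q"]) auto
  qed
qed

lemma rational_function_minus: "rational_function f \<Longrightarrow> rational_function (\<lambda>x. - f x)"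
  using rational_function_mult[OF rational_function_const[of "-1"]] by simp

lemma rational_function_diff:
  "rational_function f \<Longrightarrow> rational_function g \<Longrightarrow> rational_function (\<lambda>x. f x - g x)"
  using rational_function_add[of f "\<lambda>x. - g x"] rational_function_minus[of g] by simp

lemma rational_function_divide:
  "rational_function f \<Longrightarrow> rational_function g \<Longrightarrow> rational_function (\<lambda>x. f x / g x)"
  using rational_function_mult[of f "\<lambda>x. inverse (g x)"] rational_function_inverse[of g]
  by (simp add: divide_inverse)

lemma rational_function_power: "rational_function f \<Longrightarrow> rational_function (\<lambda>x. f x ^ n)"
  by (induction n) (auto intro: rational_function_const rational_function_mult)

lemma rational_function_power_int:
  "rational_function f \<Longrightarrow> rational_function (\<lambda>x. f x powi n)"
  unfolding power_int_def
  by (cases "n \<ge> 0") (auto intro: rational_function_power rational_function_inverse)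

lemmas rational_function_intros =
  rational_function_const rational_function_ident rational_function_add rational_function_mult
  rational_function_inverse rational_function_minus rational_function_diff rational_function_divide
  rational_function_power rational_function_power_int

definition has_rational_antiderivative_on :: "real set \<Rightarrow> (real \<Rightarrow> real) \<Rightarrow> bool" where
  "has_rational_antiderivative_on S f \<longleftrightarrow>
     (\<exists>F. rational_function F \<and> (\<forall>k\<in>S. (F has_real_derivative f k) (at k)))"

lemma has_rational_antiderivative_onI:
  "rational_function F \<Longrightarrow> (\<And>k. k \<in> S \<Longrightarrow> (F has_real_derivative f k) (at k)) \<Longrightarrow>
   has_rational_antiderivative_on S f"
  unfolding has_rational_antiderivative_on_def by blast

lemma has_rational_antiderivative_on_linear_combination:
  assumes "has_rational_antiderivative_on S f" "has_rational_antiderivative_on S g"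
    and "\<And>k. k \<in> S \<Longrightarrow> h k = a * f k + b * g k"
  shows "has_rational_antiderivative_on S h"
proof -
  obtain F G where "rational_function F" "\<forall>k\<in>S. (F has_real_derivative f k) (at k)"
    "rational_function G" "\<forall>k\<in>S. (G has_real_derivative g k) (at k)"
    using assms(1,2) unfolding has_rational_antiderivative_on_def by blast
  then show ?thesis using assms(3)
    by (intro has_rational_antiderivative_onI[of "\<lambda>k. a * F k + b * G k"])
       (auto intro!: rational_function_intros derivative_eq_intros)
qed

lemma has_rational_antiderivative_on_cmult:
  assumes "has_rational_antiderivative_on S f" and "\<And>k. k \<in> S \<Longrightarrow> h k = a * f k"
  shows "has_rational_antiderivative_on S h"
  by (rule has_rational_antiderivative_on_linear_combination[OF assms(1) assms(1), of _ a 0])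
     (simp add: assms(2))

lemma has_rational_antiderivative_on_cong:
  "has_rational_antiderivative_on S f \<Longrightarrow> (\<And>k. k \<in> S \<Longrightarrow> g k = f k) \<Longrightarrow>
   has_rational_antiderivative_on S g"
  unfolding has_rational_antiderivative_on_def by simp

locale hyperbola_parametrization =
  fixes S :: "real set" and x y \<rho> :: "real \<Rightarrow> real" and c :: real
  assumes deriv_x: "k \<in> S \<Longrightarrow> (x has_real_derivative - c * y k * \<rho> k) (at k)"
    and deriv_y: "k \<in> S \<Longrightarrow> (y has_real_derivative - x k * \<rho> k) (at k)"
    and on_hyperbola: "k \<in> S \<Longrightarrow> c * y k ^ 2 = x k ^ 2 + 4"
    and x_nonzero: "k \<in> S \<Longrightarrow> x k \<noteq> 0"
    and rational_x: "rational_function x"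
    and rational_y: "rational_function y"
begin

lemma deriv_power_int_mult_y:
  assumes k: "k \<in> S"
  shows "((\<lambda>k. x k powi (n + 1) * y k) has_real_derivative
           - (of_int (n + 2) * x k powi (n + 2) + 4 * of_int (n + 1) * x k powi n) * \<rho> k) (at k)"
proof -
  have x0: "x k \<noteq> 0" using x_nonzero[OF k] .
  have "of_int (n + 1) * x k powi n * (- c * y k * \<rho> k) * y k + x k powi (n + 1) * (- x k * \<rho> k)
        = - (of_int (n + 1) * x k powi n * (c * y k ^ 2) + x k powi (n + 1) * x k) * \<rho> k"
    by (simp add: power2_eq_square algebra_simps)
  also have "\<dots> = - (of_int (n + 2) * x k powi (n + 2) + 4 * of_int (n + 1) * x k powi n) * \<rho> k"
    unfolding on_hyperbola[OF k] using x0
    by (simp add: power_int_add power2_eq_square field_simps)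
  finally show ?thesis
    by (auto intro!: derivative_eq_intros deriv_x[OF k] deriv_y[OF k] simp: x0 mult_ac)
qed

lemma rational_antiderivative_recurrence:
  "has_rational_antiderivative_on S
     (\<lambda>k. (of_int (n + 2) * x k powi (n + 2) + 4 * of_int (n + 1) * x k powi n) * \<rho> k)"
proof (rule has_rational_antiderivative_onI)
  show "rational_function (\<lambda>k. - (x k powi (n + 1) * y k))"
    by (intro rational_function_intros rational_x rational_y)
  show "((\<lambda>k. - (x k powi (n + 1) * y k)) has_real_derivative
          (of_int (n + 2) * x k powi (n + 2) + 4 * of_int (n + 1) * x k powi n) * \<rho> k) (at k)"
    if "k \<in> S" for k
    by (rule DERIV_cong[OF DERIV_minus[OF deriv_power_int_mult_y[OF that]]])
       (simp add: algebra_simps)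
qed

lemma rational_antiderivative_power_int_add2:
  assumes "has_rational_antiderivative_on S (\<lambda>k. x k powi n * \<rho> k)" and "n \<noteq> -2"
  shows "has_rational_antiderivative_on S (\<lambda>k. x k powi (n + 2) * \<rho> k)"
  using assms(2)
  by (intro has_rational_antiderivative_on_linear_combination
          [OF rational_antiderivative_recurrence[of n] assms(1),
         of _ "1 / of_int (n + 2)" "- 4 * of_int (n + 1) / of_int (n + 2)"])
     (simp add: field_simps del: of_int_add)

lemma rational_antiderivative_power_int_diff2:
  assumes "has_rational_antiderivative_on S (\<lambda>k. x k powi (n + 2) * \<rho> k)" and "n \<noteq> -1"
  shows "has_rational_antiderivative_on S (\<lambda>k. x k powi n * \<rho> k)"
  using assms(2)
  by (intro has_rational_antiderivative_on_linear_combination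
          [OF rational_antiderivative_recurrence[of n] assms(1),
         of _ "1 / (4 * of_int (n + 1))" "- of_int (n + 2) / (4 * of_int (n + 1))"])
     (simp add: field_simps del: of_int_add)

lemma rational_antiderivative_odd_power:
  "has_rational_antiderivative_on S (\<lambda>k. x k powi (2 * int m + 1) * \<rho> k)"
proof (induction m)
  case 0
  show ?case
    by (rule has_rational_antiderivative_on_cmult[OF rational_antiderivative_recurrence[of "-1"],
          of _ 1]) simp
next
  case (Suc m)
  have "2 * int (Suc m) + 1 = 2 * int m + 1 + 2" by simp
  with rational_antiderivative_power_int_add2[OF Suc.IH] show ?case by simp
qed

lemma rational_antiderivative_inverse_even_power:
  "has_rational_antiderivative_on S (\<lambda>k. x k powi (- 2 * int m - 2) * \<rho> k)"
proof (induction m)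
  case 0
  show ?case
    by (rule has_rational_antiderivative_on_cmult[OF rational_antiderivative_recurrence[of "-2"],
          of _ "- 1 / 4"]) simp
next
  case (Suc m)
  have "- 2 * int (Suc m) - 2 + 2 = - 2 * int m - 2" by simp
  with Suc.IH have "has_rational_antiderivative_on S
      (\<lambda>k. x k powi (- 2 * int (Suc m) - 2 + 2) * \<rho> k)" by (simp only:)
  then show ?case by (rule rational_antiderivative_power_int_diff2) simp
qed

end

lemma has_rational_antiderivative_on_poly_quotient:
  assumes "has_rational_antiderivative_on S f"
  shows "\<exists>p q :: real poly. q \<noteq> 0 \<and>
           (\<forall>k. poly q k \<noteq> 0 \<and> k \<in> S \<longrightarrow>
              ((\<lambda>x. poly p x / poly q x) has_real_derivative f k) (at k))"
proof -
  obtain F where F: "rational_function F" "\<forall>k\<in>S. (F has_real_derivative f k) (at k)"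
    using assms unfolding has_rational_antiderivative_on_def by blast
  obtain p q where q: "q \<noteq> 0" and pq: "\<forall>x. poly q x \<noteq> 0 \<longrightarrow> F x = poly p x / poly q x"
    using F(1) unfolding rational_function_def by blast
  have "open {x. poly q x \<noteq> 0}"
    by (rule open_Collect_neq) (auto intro: continuous_intros)
  then have "((\<lambda>x. poly p x / poly q x) has_real_derivative f k) (at k)"
    if "poly q k \<noteq> 0" "k \<in> S" for k
    by (rule has_field_derivative_transform_within_open[OF F(2)[rule_format, OF that(2)]])
       (use pq that in auto)
  with q show ?thesis by blast
qed

definition integrand_domain :: "real set" where
  "integrand_domain = {k. k \<noteq> 0 \<and> 1 - k^2 \<noteq> 0 \<and> 1 + k - k^2 \<noteq> 0 \<and> 1 - 4*k - k^2 \<noteq> 0}"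

lemma integrand_substituted:
  assumes "k \<noteq> 0"
  shows "integrand a1 a2 a3 k =
           (1/k - k) powi a1 * (1/k - k + 1) powi a2 * (1/k - k - 4) powi a3 / k"
proof -
  have factors: "1 - k^2 = k * (1/k - k)" "1 + k - k^2 = k * (1/k - k + 1)"
    "1 - 4*k - k^2 = k * (1/k - k - 4)"
    using assms by (auto simp: field_simps power2_eq_square)
  have "k powi (a1 + a2 + a3 + 1) = k powi a1 * k powi a2 * k powi a3 * k"
    using assms by (simp add: power_int_add)
  then show ?thesis
    unfolding integrand_def factors power_int_mult_distrib using assms
    by (simp add: field_simps power_int_not_zero)
qed

lemma integrand_ratio:
  assumes "1 + k - k^2 \<noteq> 0" and "a2 + a3 = -1"
  shows "integrand 0 a2 a3 k = ((1 - 4*k - k^2) / (1 + k - k^2)) powi a3 / (1 + k - k^2)"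
proof -
  have a2: "a2 = -1 - a3" using assms(2) by simp
  show ?thesis unfolding a2 using assms(1)
    by (simp add: integrand_def power_int_diff power_int_divide_distrib power_int_minus field_simps)
qed

lemma has_real_derivative_substitution:
  fixes g :: "real \<Rightarrow> real"
  assumes k: "k \<noteq> 0" and g: "(g has_real_derivative D) (at (1/k - k))"
    and ode: "((1/k - k)^2 + 4) * D + (1/k - k) * g (1/k - k) = - f"
  shows "((\<lambda>k. g (1/k - k) * (1/k + k)) has_real_derivative f / k) (at k)"
proof -
  have "((\<lambda>k. 1/k - k) has_real_derivative - (1/k + k) / k) (at k)"
    "((\<lambda>k. 1/k + k) has_real_derivative - (1/k - k) / k) (at k)"
    using k by (auto intro!: derivative_eq_intros simp: field_simps power2_eq_square)
  from DERIV_mult[OF DERIV_chain2[OF g this(1)] this(2)]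
  have "((\<lambda>k. g (1/k - k) * (1/k + k)) has_real_derivative
          D * (- (1/k + k) / k) * (1/k + k) + (- (1/k - k) / k) * g (1/k - k)) (at k)" .
  moreover have "(1/k + k)^2 = (1/k - k)^2 + 4"
    using k by (simp add: field_simps power2_eq_square)
  then have "D * (- (1/k + k) / k) * (1/k + k) + (- (1/k - k) / k) * g (1/k - k)
      = - (((1/k - k)^2 + 4) * D + (1/k - k) * g (1/k - k)) / k"
    by (simp add: field_simps power2_eq_square)
  ultimately show ?thesis unfolding ode by simp
qed

lemma rational_antiderivative_by_substitution:
  assumes g: "rational_function (\<lambda>k. g (1/k - k))"
    and ode: "\<And>t. t \<noteq> 0 \<Longrightarrow> t \<noteq> -1 \<Longrightarrow> t \<noteq> 4 \<Longrightarrow> \<exists>D. (g has_real_derivative D) (at t) \<and>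
                (t^2 + 4) * D + t * g t = - (t powi a1 * (t + 1) powi a2 * (t - 4) powi a3)"
  shows "has_rational_antiderivative_on integrand_domain (integrand a1 a2 a3)"
proof (rule has_rational_antiderivative_onI)
  show "rational_function (\<lambda>k. g (1/k - k) * (1/k + k))"
    by (intro rational_function_intros g)
  fix k assume "k \<in> integrand_domain"
  then have "k \<noteq> 0" "1/k - k \<noteq> 0" "1/k - k \<noteq> -1" "1/k - k \<noteq> 4"
    by (auto simp: integrand_domain_def field_simps power2_eq_square)
  with ode obtain D where "(g has_real_derivative D) (at (1/k - k))"
    "((1/k - k)^2 + 4) * D + (1/k - k) * g (1/k - k)
       = - ((1/k - k) powi a1 * (1/k - k + 1) powi a2 * (1/k - k - 4) powi a3)"
    by blast
  then show "((\<lambda>k. g (1/k - k) * (1/k + k)) has_real_derivative integrand a1 a2 a3 k) (at k)"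
    using has_real_derivative_substitution \<open>k \<noteq> 0\<close> by (simp add: integrand_substituted)
qed

lemma hyperbola_parametrization_t_coordinate:
  "hyperbola_parametrization integrand_domain (\<lambda>k. 1/k - k) (\<lambda>k. 1/k + k) (\<lambda>k. 1/k) 1"
proof (rule hyperbola_parametrization.intro)
  fix k assume "k \<in> integrand_domain"
  then have k: "k \<noteq> 0" "1 - k^2 \<noteq> 0" by (auto simp: integrand_domain_def)
  then show "((\<lambda>k. 1/k - k) has_real_derivative - 1 * (1/k + k) * (1/k)) (at k)"
    and "((\<lambda>k. 1/k + k) has_real_derivative - (1/k - k) * (1/k)) (at k)"
    by (auto intro!: derivative_eq_intros simp: field_simps power2_eq_square)
  show "1 * (1/k + k)^2 = (1/k - k)^2 + 4"
    using k by (simp add: field_simps power2_eq_square)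
  show "1/k - k \<noteq> 0"
    using k by (simp add: field_simps power2_eq_square)
qed (intro rational_function_intros)+

lemma hyperbola_parametrization_moebius_coordinate:
  "hyperbola_parametrization integrand_domain (\<lambda>k. (1 - 4*k - k^2) / (1 + k - k^2))
     (\<lambda>k. (1 + k^2) / (1 + k - k^2)) (\<lambda>k. 1 / (1 + k - k^2)) 5"
proof (rule hyperbola_parametrization.intro)
  fix k assume "k \<in> integrand_domain"
  then have B: "1 + k - k^2 \<noteq> 0" and C: "1 - 4*k - k^2 \<noteq> 0"
    by (auto simp: integrand_domain_def)
  then show "((\<lambda>k. (1 - 4*k - k^2) / (1 + k - k^2)) has_real_derivative
              - 5 * ((1 + k^2) / (1 + k - k^2)) * (1 / (1 + k - k^2))) (at k)"
    and "((\<lambda>k. (1 + k^2) / (1 + k - k^2)) has_real_derivative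
              - ((1 - 4*k - k^2) / (1 + k - k^2)) * (1 / (1 + k - k^2))) (at k)"
    by (auto intro!: derivative_eq_intros simp: field_simps power2_eq_square)
       (simp add: minus_divide_left algebra_simps)
  have ratio: "5 * (Q / B)^2 = (C / B)^2 + 4" if "5 * Q^2 = C^2 + 4 * B^2" "B \<noteq> 0" for B C Q :: real
    using that by (simp add: field_simps)
  show "5 * ((1 + k^2) / (1 + k - k^2))^2 = ((1 - 4*k - k^2) / (1 + k - k^2))^2 + 4"
    by (rule ratio[OF _ B]) (simp add: algebra_simps power2_eq_square)
  show "(1 - 4*k - k^2) / (1 + k - k^2) \<noteq> 0"
    using B C by simp
qed (intro rational_function_intros)+

lemma rational_antiderivative_odd_0_0:
  "has_rational_antiderivative_on integrand_domain (integrand (2 * int m + 1) 0 0)"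
  using hyperbola_parametrization.rational_antiderivative_odd_power
      [OF hyperbola_parametrization_t_coordinate]
  by (rule has_rational_antiderivative_on_cong)
     (simp add: integrand_domain_def integrand_substituted)

lemma rational_antiderivative_neg_even_0_0:
  "has_rational_antiderivative_on integrand_domain (integrand (- 2 * int m - 2) 0 0)"
  using hyperbola_parametrization.rational_antiderivative_inverse_even_power
      [OF hyperbola_parametrization_t_coordinate]
  by (rule has_rational_antiderivative_on_cong)
     (simp add: integrand_domain_def integrand_substituted)

lemma rational_antiderivative_0_neg_even_odd:
  "has_rational_antiderivative_on integrand_domain (integrand 0 (- 2 * int m - 2) (2 * int m + 1))"
  using hyperbola_parametrization.rational_antiderivative_odd_power
      [OF hyperbola_parametrization_moebius_coordinate]
  by (rule has_rational_antiderivative_on_cong)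
     (simp add: integrand_domain_def integrand_ratio)

lemma rational_antiderivative_0_odd_neg_even:
  "has_rational_antiderivative_on integrand_domain (integrand 0 (2 * int m + 1) (- 2 * int m - 2))"
  using hyperbola_parametrization.rational_antiderivative_inverse_even_power
      [OF hyperbola_parametrization_moebius_coordinate]
  by (rule has_rational_antiderivative_on_cong)
     (simp add: integrand_domain_def integrand_ratio)

lemma rational_antiderivative_sporadic:
  shows "has_rational_antiderivative_on integrand_domain (integrand 1 (-4) 0)"
    and "has_rational_antiderivative_on integrand_domain (integrand 0 2 1)"
    and "has_rational_antiderivative_on integrand_domain (integrand (-4) 1 2)"
    and "has_rational_antiderivative_on integrand_domain (integrand 2 0 (-4))"
    and "has_rational_antiderivative_on integrand_domain (integrand 0 (-5) 1)"
    and "has_rational_antiderivative_on integrand_domain (integrand 1 3 0)"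
    and "has_rational_antiderivative_on integrand_domain (integrand (-5) 0 3)"
    and "has_rational_antiderivative_on integrand_domain (integrand 3 1 (-5))"
proof -
  show "has_rational_antiderivative_on integrand_domain (integrand 1 (-4) 0)"
    by (rule rational_antiderivative_by_substitution
          [where g = "\<lambda>t. (1/15 + t/5 + t^2/15) / (t + 1)^3"],
        intro rational_function_intros, intro exI conjI, (rule derivative_eq_intros refl | simp)+,
        simp add: power_int_minus field_simps, algebra)
  show "has_rational_antiderivative_on integrand_domain (integrand 0 2 1)"
    by (rule rational_antiderivative_by_substitution
          [where g = "\<lambda>t. 29/3 + t - t^2/3"],
        intro rational_function_intros, intro exI conjI, (rule derivative_eq_intros refl | simp)+,
        simp add: power_int_minus field_simps, algebra)
  show "has_rational_antiderivative_on integrand_domain (integrand (-4) 1 2)"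
    by (rule rational_antiderivative_by_substitution
          [where g = "\<lambda>t. (4/3 + t - 29/12 * t^2) / t^3"],
        intro rational_function_intros, intro exI conjI, (rule derivative_eq_intros refl | simp)+,
        simp add: power_int_minus field_simps, algebra)
  show "has_rational_antiderivative_on integrand_domain (integrand 2 0 (-4))"
    by (rule rational_antiderivative_by_substitution
          [where g = "\<lambda>t. (- 4/15 + t/5 - t^2/60) / (t - 4)^3"],
        intro rational_function_intros, intro exI conjI, (rule derivative_eq_intros refl | simp)+,
        simp add: power_int_minus field_simps, algebra)
  show "has_rational_antiderivative_on integrand_domain (integrand 0 (-5) 1)"
    by (rule rational_antiderivative_by_substitution
          [where g = "\<lambda>t. (- 1/5 + t/5 + t^2/5 + t^3/20) / (t + 1)^4"],
        intro rational_function_intros, intro exI conjI, (rule derivative_eq_intros refl | simp)+,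
        simp add: power_int_minus field_simps, algebra)
  show "has_rational_antiderivative_on integrand_domain (integrand 1 3 0)"
    by (rule rational_antiderivative_by_substitution
          [where g = "\<lambda>t. 7 - t^2 - t^3/4"],
        intro rational_function_intros, intro exI conjI, (rule derivative_eq_intros refl | simp)+,
        simp add: power_int_minus field_simps, algebra)
  show "has_rational_antiderivative_on integrand_domain (integrand (-5) 0 3)"
    by (rule rational_antiderivative_by_substitution
          [where g = "\<lambda>t. (- 4 + 4 * t - 7/4 * t^3) / t^4"],
        intro rational_function_intros, intro exI conjI, (rule derivative_eq_intros refl | simp)+,
        simp add: power_int_minus field_simps, algebra)
  show "has_rational_antiderivative_on integrand_domain (integrand 3 1 (-5))"
    by (rule rational_antiderivative_by_substitution
          [where g = "\<lambda>t. (4/5 - 4/5 * t + t^2/5 + t^3/20) / (t - 4)^4"],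
        intro rational_function_intros, intro exI conjI, (rule derivative_eq_intros refl | simp)+,
        simp add: power_int_minus field_simps, algebra)
qed

theorem theorem5:
  fixes a1 a2 a3 :: int
  assumes "(a1, a2, a3) \<in> special_triples"
  shows "\<exists>p q :: real poly. q \<noteq> 0 \<and>
           (\<forall>k. poly q k \<noteq> 0 \<and> k \<noteq> 0 \<and> 1 - k^2 \<noteq> 0 \<and> 1 + k - k^2 \<noteq> 0
                 \<and> 1 - 4*k - k^2 \<noteq> 0 \<longrightarrow>
              ((\<lambda>x. poly p x / poly q x) has_real_derivative integrand a1 a2 a3 k) (at k))"
proof -
  have "has_rational_antiderivative_on integrand_domain (integrand a1 a2 a3)"
    using assms rational_antiderivative_sporadic
      rational_antiderivative_odd_0_0 rational_antiderivative_odd_0_0[of 0]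
      rational_antiderivative_neg_even_0_0 rational_antiderivative_neg_even_0_0[of 0]
      rational_antiderivative_0_neg_even_odd rational_antiderivative_0_neg_even_odd[of 0]
      rational_antiderivative_0_odd_neg_even rational_antiderivative_0_odd_neg_even[of 0]
    unfolding special_triples_def by auto
  from has_rational_antiderivative_on_poly_quotient[OF this] show ?thesis
    unfolding integrand_domain_def by auto
qed

end
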